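(* There exists an absolute constant $C>0$ such that the following holds. Let $N\in\mathbb N\cup\{0\}$, $\kappa\in(0,1)$, and $\rho_0(r,\theta)=\sum_{\ell=0}^{2^N-1}\chi_{(\ell2^{-N},(\ell+1)2^{-N}]}(r)f^\ell(\theta)$ with each $f^\ell\in L^\infty$ $2\pi$-periodic and $\int_0^{2\pi}f^\ell=0$; let $\rho$ be the corresponding solution. Then for every integer $M>N$ and every $Q\in\mathcal Q_M$: (a) if $t\ge C\frac{2^M}{\kappa}$, then $\big|\fint_Q\rho(t,\cdot)\big|\le\frac\kappa4\|\rho(t,\cdot)\|_{L^\infty}$; (b) if $t\ge C2^{2M}$, then $\big|\fint_Q\rho(t,\cdot)\big|\le2^{-M}\|\rho(t,\cdot)\|_{L^\infty}$.
   Context: $B_1\subset\mathbb R^2$ open unit disk, polar coordinates $(r,\theta)$, $\chi_I$ indicator of $I$, $\fint_Q=\frac1{|Q|}\int_Q$. Velocity $u(r,\theta)=2\pi r^2(\sin\theta,-\cos\theta)$; $\rho(t,\cdot)$ solves $\partial_t\rho+\operatorname{div}(u\rho)=0$, $\rho(0)=\rho_0$, explicitly $\rho(t,r,\theta)=\rho_0(r,\theta+2\pi tr)$. Annular tiling: for $M\in\mathbb N$, $i=0,\dots,2^M-1$, $j=0,\dots,i$, $Q^M_{ij}=\{(r,\theta): r\in(i2^{-M},(i+1)2^{-M}],\ \theta\in 2\pi(\tfrac{j}{i+1},\tfrac{j+1}{i+1}]\}$; $\mathcal Q_M$ is the family of all $Q^M_{ij}$. *)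

theory Defs
  imports "HOL-Analysis.Analysis" "HOL-Probability.Essential_Supremum"
begin

text \<open>Points of the unit disk are represented in polar coordinates (r, theta),
  r in (0,1], theta in (0, 2 pi]. The area (Lebesgue) measure of the disk in
  these coordinates is r dr dtheta.\<close>

definition polar_disk :: "(real \<times> real) set" where
  "polar_disk = {0<..1} \<times> {0<..2*pi}"

definition disk_measure :: "(real \<times> real) measure" where
  "disk_measure = density lborel (\<lambda>p. ennreal (fst p) * indicator polar_disk p)"

definition rho0 :: "nat \<Rightarrow> (nat \<Rightarrow> real \<Rightarrow> real) \<Rightarrow> real \<Rightarrow> real \<Rightarrow> real" where
  "rho0 N f r \<theta> = (\<Sum>l<2^N. indicator {real l / 2^N <.. (real l + 1) / 2^N} r * f l \<theta>)"

text \<open>Explicit solution of the transport equation with velocity 2 pi r^2 (sin theta, - cos theta).\<close>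
definition rho_sol :: "nat \<Rightarrow> (nat \<Rightarrow> real \<Rightarrow> real) \<Rightarrow> real \<Rightarrow> real \<times> real \<Rightarrow> real" where
  "rho_sol N f t p = rho0 N f (fst p) (snd p + 2 * pi * t * fst p)"

definition Qcell :: "nat \<Rightarrow> nat \<Rightarrow> nat \<Rightarrow> (real \<times> real) set" where
  "Qcell M i j = {(r, \<theta>). real i / 2^M < r \<and> r \<le> (real i + 1) / 2^M \<and>
       2 * pi * (real j / (real i + 1)) < \<theta> \<and> \<theta> \<le> 2 * pi * ((real j + 1) / (real i + 1))}"

definition QM :: "nat \<Rightarrow> (real \<times> real) set set" where
  "QM M = {Qcell M i j | i j. i < 2^M \<and> j \<le> i}"

definition avg :: "(real \<times> real) set \<Rightarrow> (real \<times> real \<Rightarrow> real) \<Rightarrow> real" where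
  "avg Q g = (LINT p:Q|disk_measure. g p) / measure disk_measure Q"

definition Linf_disk :: "(real \<times> real \<Rightarrow> real) \<Rightarrow> ereal" where
  "Linf_disk g = esssup disk_measure (\<lambda>p. ereal \<bar>g p\<bar>)"

end

theory Submission
  imports Defs
begin

text \<open>On a cell \<open>Q\<close> of level \<open>M > N\<close> the initial datum is a single angular profile \<open>g\<close>,
  so on \<open>Q\<close> the solution is \<open>g\<close> sheared by \<open>\<theta> \<mapsto> \<theta> + 2\<pi>tr\<close>. Integrating in \<open>\<theta>\<close>
  replaces \<open>g\<close> by its primitive \<open>G\<close>, which is \<open>2\<pi>\<close>-periodic because \<open>g\<close> has mean zero,
  hence bounded by the \<open>L\<^sup>1\<close> norm \<open>P\<close> of \<open>g\<close> over a period. What remains is the radial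
  oscillatory integral \<open>\<integral> r (G(b + 2\<pi>tr) - G(a + 2\<pi>tr)) dr\<close>, which one integration by parts
  shows to be \<open>O(P/t)\<close>. On each circle of the annulus \<open>\<rho>(t)\<close> is a rotation of \<open>g\<close>, so
  \<open>P \<le> 2\<pi> \<parallel>\<rho>(t)\<parallel>\<^sub>\<infinity>\<close>; dividing by \<open>|Q|\<close> gives
  \<open>|avg\<^sub>Q \<rho>(t)| \<le> 4 \<cdot> 2\<^sup>M \<parallel>\<rho>(t)\<parallel>\<^sub>\<infinity> / t\<close>, so \<open>C = 16\<close> works for both claims.\<close>

section \<open>Interval integrals and periodic functions\<close>

lemma interval_integral_shift:
  fixes g :: "real \<Rightarrow> real" and x y s :: real
  assumes "x \<le> y"
  shows "(LBINT z=x..y. g (z + s)) = (LBINT z=x+s..y+s. g z)"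
proof -
  have "(LBINT z=x+s..y+s. g z) = (\<integral>z. indicator {x+s<..y+s} (s + 1 * z) *\<^sub>R g (s + 1 * z) \<partial>lborel)"
    using assms lborel_integral_real_affine[of 1 "\<lambda>z. indicator {x+s<..y+s} z *\<^sub>R g z" s]
    by (simp add: interval_integral_Ioc set_lebesgue_integral_def)
  also have "\<dots> = (\<integral>z. indicator {x<..y} z *\<^sub>R g (z + s) \<partial>lborel)"
    by (intro Bochner_Integration.integral_cong refl) (auto simp: indicator_def add.commute)
  finally show ?thesis
    using assms by (simp add: interval_integral_Ioc set_lebesgue_integral_def)
qed

lemma set_integrable_Icc_if_AE_bounded:
  fixes g :: "real \<Rightarrow> real"
  assumes "g \<in> borel_measurable lborel" and "AE z in lborel. \<bar>g z\<bar> \<le> B"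
  shows "set_integrable lborel {x..y} g"
  unfolding set_integrable_def
proof (rule Bochner_Integration.integrable_bound)
  show "integrable lborel (\<lambda>z. indicator {x..y} z *\<^sub>R \<bar>B\<bar>)"
    using borel_integrable_atLeastAtMost'[of x y "\<lambda>_. \<bar>B\<bar>"] unfolding set_integrable_def by auto
  show "AE z in lborel. norm (indicator {x..y} z *\<^sub>R g z) \<le> norm (indicator {x..y} z *\<^sub>R \<bar>B\<bar>)"
    using assms(2) by eventually_elim (auto split: split_indicator)
qed (use assms(1) in measurable)

lemma interval_lebesgue_integrable_if_Icc:
  fixes g :: "real \<Rightarrow> real" and x y :: real
  assumes "\<And>x y. set_integrable lborel {x..y} g"
  shows "interval_lebesgue_integrable lborel (ereal x) (ereal y) g"
  using set_integrable_subset[OF assms[of x y], of "{x<..<y}"]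
    set_integrable_subset[OF assms[of y x], of "{y<..<x}"]
  by (auto simp: einterval_eq interval_lebesgue_integrable_def
      greaterThanLessThan_subseteq_atLeastAtMost_iff)

lemma interval_integral_sum_real:
  fixes g :: "real \<Rightarrow> real" and a b c :: real
  assumes "\<And>x y. set_integrable lborel {x..y} g"
  shows "(LBINT z=a..b. g z) + (LBINT z=b..c. g z) = (LBINT z=a..c. g z)"
proof (rule interval_integral_sum)
  have "min (ereal a) (min (ereal b) (ereal c)) = ereal (min a (min b c))"
       "max (ereal a) (max (ereal b) (ereal c)) = ereal (max a (max b c))"
    by (auto simp: min_def max_def)
  then show "interval_lebesgue_integrable lborel (min (ereal a) (min (ereal b) (ereal c)))
     (max (ereal a) (max (ereal b) (ereal c))) g"
    using interval_lebesgue_integrable_if_Icc[OF assms] by presburger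
qed

lemma abs_interval_integral_le:
  fixes g :: "real \<Rightarrow> real" and a b K :: real
  assumes "a \<le> b" and int: "set_integrable lborel {a..b} g"
    and bound: "AE z in lborel. z \<in> {a<..b} \<longrightarrow> \<bar>g z\<bar> \<le> K"
  shows "\<bar>LBINT z=a..b. g z\<bar> \<le> K * (b - a)"
proof -
  have int': "set_integrable lborel {a<..b} g"
    by (rule set_integrable_subset[OF int]) auto
  have "\<bar>LBINT z=a..b. g z\<bar> = \<bar>LBINT z:{a<..b}. g z\<bar>"
    using assms(1) by (simp add: interval_integral_Ioc)
  also have "\<dots> \<le> (LBINT z:{a<..b}. \<bar>g z\<bar>)"
    using set_integral_norm_bound[OF int'] by simp
  also have "\<dots> \<le> (LBINT z:{a<..b}. K)"
  proof (rule set_integral_mono_AE)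
    show "set_integrable lborel {a<..b} (\<lambda>z. \<bar>g z\<bar>)"
      by (rule set_integrable_abs[OF int'])
    show "set_integrable lborel {a<..b} (\<lambda>z. K)"
      by (rule set_integrable_subset[OF borel_integrable_atLeastAtMost'[of a b "\<lambda>_. K"]]) auto
  qed (use bound in simp)
  also have "\<dots> = K * (b - a)"
    using assms(1) interval_integral_const(2)[of a b K] interval_integral_Ioc[of a b "\<lambda>_. K"] by simp
  finally show ?thesis .
qed

lemma reduce_mod_period:
  fixes p x :: real
  assumes "p > 0"
  obtains y k where "0 \<le> y" "y < p" "x = y + p * real_of_int k"
proof
  define k where "k = \<lfloor>x / p\<rfloor>"
  show "x = (x - p * real_of_int k) + p * real_of_int k" by simp
  have "real_of_int k \<le> x / p" "x / p < real_of_int k + 1"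
    unfolding k_def by linarith+
  then show "0 \<le> x - p * real_of_int k" "x - p * real_of_int k < p"
    using assms by (simp_all add: field_simps)
qed

lemma periodic_int:
  fixes g :: "real \<Rightarrow> 'a"
  assumes per: "\<And>x. g (x + p) = g x"
  shows "g (x + p * real_of_int k) = g x"
proof -
  have nat: "g (x + p * real n) = g x" for x n
  proof (induction n arbitrary: x)
    case (Suc n)
    have "g (x + p * real (Suc n)) = g ((x + p * real n) + p)" by (simp add: algebra_simps)
    then show ?case using per Suc by simp
  qed simp
  show ?thesis
  proof (cases "k \<ge> 0")
    case True
    then show ?thesis using nat[of x "nat k"] by simp
  next
    case False
    then have "g x = g ((x + p * real_of_int k) + p * real (nat (-k)))" by simp
    then show ?thesis using nat by simp
  qed
qed

lemma periodic_interval_integral: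
  fixes g :: "real \<Rightarrow> real" and p c :: real
  assumes "p > 0" and per: "\<And>x. g (x + p) = g x"
    and li: "\<And>x y. set_integrable lborel {x..y} g"
  shows "(LBINT z=c..c+p. g z) = (LBINT z=0..p. g z)"
proof -
  obtain y k where y: "0 \<le> y" "y < p" and c: "c = y + p * real_of_int k"
    using reduce_mod_period[OF \<open>p > 0\<close>] .
  have "(LBINT z=c..c+p. g z) = (LBINT z=y..y+p. g (z + p * real_of_int k))"
    using interval_integral_shift[of y "y + p" g "p * real_of_int k"] \<open>p > 0\<close> by (simp add: c add_ac)
  also have "\<dots> = (LBINT z=y..p. g z) + (LBINT z=p..y+p. g z)"
    by (simp add: periodic_int[of g p, OF per] interval_integral_sum_real[OF li])
  also have "(LBINT z=p..y+p. g z) = (LBINT z=0..y. g z)"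
    using interval_integral_shift[of 0 y g p] y by (simp add: zero_ereal_def per)
  also have "(LBINT z=y..p. g z) + (LBINT z=0..y. g z) = (LBINT z=0..p. g z)"
    using interval_integral_sum_real[OF li, of 0 y p] by (simp add: zero_ereal_def add.commute)
  finally show ?thesis .
qed

section \<open>Primitives and an oscillatory integral\<close>

definition primitive :: "(real \<Rightarrow> real) \<Rightarrow> real \<Rightarrow> real" where
  "primitive g x = (LBINT z=0..x. g z)"

lemma primitive_diff:
  fixes g :: "real \<Rightarrow> real" and x y :: real
  assumes "\<And>x y. set_integrable lborel {x..y} g"
  shows "primitive g y - primitive g x = (LBINT z=x..y. g z)"
  using interval_integral_sum_real[OF assms, of 0 x y] unfolding primitive_def
  by (simp add: zero_ereal_def)

lemma primitive_lipschitz: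
  assumes "g \<in> borel_measurable lborel" and bound: "AE z in lborel. \<bar>g z\<bar> \<le> B"
  shows "\<bar>primitive g y - primitive g x\<bar> \<le> B * \<bar>y - x\<bar>"
proof -
  note li = set_integrable_Icc_if_AE_bounded[OF assms]
  have "\<bar>primitive g v - primitive g u\<bar> \<le> B * (v - u)" if "u \<le> v" for u v
    unfolding primitive_diff[OF li] by (rule abs_interval_integral_le) (use that li bound in auto)
  from this[of x y] this[of y x] show ?thesis
    by (cases "x \<le> y") (auto simp: abs_minus_commute)
qed

lemma continuous_on_primitive:
  assumes "g \<in> borel_measurable lborel" and bound: "AE z in lborel. \<bar>g z\<bar> \<le> B"
  shows "continuous_on UNIV (primitive g)"
proof (rule lipschitz_on_continuous_on[of "\<bar>B\<bar>"], rule lipschitz_onI)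
  have "AE z in lborel. \<bar>g z\<bar> \<le> \<bar>B\<bar>"
    using bound by eventually_elim auto
  from primitive_lipschitz[OF assms(1) this]
  show "dist (primitive g x) (primitive g y) \<le> \<bar>B\<bar> * dist x y" for x y
    by (simp add: dist_real_def abs_minus_commute)
qed simp

lemma has_field_derivative_primitive:
  assumes cont: "continuous_on UNIV F"
  shows "(primitive F has_field_derivative F x) (at x)"
proof -
  define a where "a = min 0 (x - 1)"
  define b where "b = max 0 (x + 1)"
  have "((\<lambda>u. LBINT y=ereal 0..u. F y) has_vector_derivative F x) (at x within {a..b})"
    by (rule interval_integral_FTC2) (auto simp: a_def b_def intro: continuous_on_subset[OF cont])
  moreover have "primitive F = (\<lambda>u. LBINT y=ereal 0..u. F y)"
    by (simp add: fun_eq_iff primitive_def zero_ereal_def)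
  ultimately have "(primitive F has_vector_derivative F x) (at x within {a..b})"
    by simp
  then have "(primitive F has_vector_derivative F x) (at x within {a<..<b})"
    by (rule has_vector_derivative_within_subset) auto
  moreover have "x \<in> {a<..<b}"
    unfolding a_def b_def by (simp add: min_def max_def)
  ultimately show ?thesis
    using at_within_open[of x "{a<..<b}"] by (simp add: has_real_derivative_iff_has_vector_derivative)
qed

context
  fixes g :: "real \<Rightarrow> real" and p :: real
  assumes period: "p > 0" and per: "\<And>x. g (x + p) = g x"
    and li: "\<And>x y. set_integrable lborel {x..y} g"
    and mean_zero: "(LBINT z=0..p. g z) = 0"
begin

lemma primitive_periodic: "primitive g (x + p) = primitive g x"
  using primitive_diff[OF li, where x=x and y="x + p"] periodic_interval_integral[OF period per li, of x]
    mean_zero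
  by simp

lemma abs_primitive_le: "\<bar>primitive g x\<bar> \<le> (LBINT z=0..p. \<bar>g z\<bar>)"
proof -
  obtain y k where y: "0 \<le> y" "y < p" and x: "x = y + p * real_of_int k"
    using reduce_mod_period[OF period] .
  have li_abs: "set_integrable lborel {u..v} (\<lambda>z. \<bar>g z\<bar>)" for u v
    by (rule set_integrable_abs[OF li])
  have "primitive g x = primitive g y"
    unfolding x by (rule periodic_int[of "primitive g", OF primitive_periodic])
  then have "\<bar>primitive g x\<bar> = \<bar>LBINT z=0..y. g z\<bar>"
    by (simp add: primitive_def)
  also have "\<dots> \<le> (LBINT z=0..y. \<bar>g z\<bar>)"
    using interval_integral_norm[OF interval_lebesgue_integrable_if_Icc[OF li, of 0 y]] y
    by (simp add: zero_ereal_def)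
  also have "\<dots> \<le> (LBINT z=0..y. \<bar>g z\<bar>) + (LBINT z=y..p. \<bar>g z\<bar>)"
  proof -
    have "0 \<le> (LBINT z=y..p. \<bar>g z\<bar>)"
      using \<open>y < p\<close> by (simp add: interval_integral_Ioc set_lebesgue_integral_def)
    then show ?thesis by linarith
  qed
  also have "\<dots> = (LBINT z=0..p. \<bar>g z\<bar>)"
    using interval_integral_sum_real[OF li_abs, of 0 y p] by (simp add: zero_ereal_def)
  finally show ?thesis .
qed

end

lemma abs_integral_by_parts_le:
  fixes \<phi> D :: "real \<Rightarrow> real" and K r1 r2 :: real
  assumes d\<phi>: "\<And>r. (\<phi> has_field_derivative D r) (at r)" and cD: "continuous_on UNIV D"
    and \<phi>_bound: "\<And>r. \<bar>\<phi> r\<bar> \<le> K" and "0 \<le> r1" "r1 \<le> r2"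
  shows "\<bar>LBINT r=r1..r2. r * D r\<bar> \<le> 2 * r2 * K"
proof -
  have c\<phi>: "continuous_on UNIV \<phi>"
    by (metis d\<phi> DERIV_isCont continuous_at_imp_continuous_on)
  have d\<psi>: "((\<lambda>r. r * \<phi> r) has_vector_derivative (\<phi> r + r * D r)) (at r within X)" for r X
    unfolding has_real_derivative_iff_has_vector_derivative[symmetric]
    by (auto intro!: derivative_eq_intros d\<phi>[THEN DERIV_subset] simp: algebra_simps)
  have "(LBINT r=r1..r2. \<phi> r + r * D r) = r2 * \<phi> r2 - r1 * \<phi> r1"
    by (rule interval_integral_FTC_finite)
      (auto intro!: continuous_intros continuous_on_subset[OF c\<phi>] continuous_on_subset[OF cD] d\<psi>)
  then have by_parts: "(LBINT r=r1..r2. r * D r) = r2 * \<phi> r2 - r1 * \<phi> r1 - (LBINT r=r1..r2. \<phi> r)"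
    using interval_lebesgue_integral_add(2)[of lborel r1 r2 \<phi> "\<lambda>r. r * D r"] \<open>r1 \<le> r2\<close>
    by (simp add: interval_integrable_continuous_on continuous_on_subset[OF c\<phi>]
        continuous_on_mult continuous_on_subset[OF cD])
  have "\<bar>LBINT r=r1..r2. \<phi> r\<bar> \<le> K * (r2 - r1)"
    by (rule abs_interval_integral_le)
      (use \<open>r1 \<le> r2\<close> \<phi>_bound in \<open>auto intro: borel_integrable_atLeastAtMost' continuous_on_subset[OF c\<phi>]\<close>)
  moreover have "\<bar>r2 * \<phi> r2\<bar> \<le> r2 * K" "\<bar>r1 * \<phi> r1\<bar> \<le> r1 * K"
    using \<open>0 \<le> r1\<close> \<open>r1 \<le> r2\<close> \<phi>_bound[of r1] \<phi>_bound[of r2]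
    by (simp_all add: abs_mult mult_left_mono)
  ultimately have "\<bar>LBINT r=r1..r2. r * D r\<bar> \<le> r2 * K + r1 * K + K * (r2 - r1)"
    unfolding by_parts by linarith
  then show ?thesis
    by (simp add: algebra_simps)
qed

lemma oscillatory_integral_bound:
  fixes F :: "real \<Rightarrow> real" and P c r1 r2 a b :: real
  assumes cont: "continuous_on UNIV F" and bound: "\<And>x. \<bar>F x\<bar> \<le> P"
    and "c > 0" "0 \<le> r1" "r1 \<le> r2" "a \<le> b"
  shows "\<bar>LBINT r=r1..r2. r * (F (b + c * r) - F (a + c * r))\<bar> \<le> 2 * r2 * (b - a) * P / c"
proof -
  define \<phi> where "\<phi> r = (primitive F (b + c * r) - primitive F (a + c * r)) / c" for r
  have "(\<phi> has_field_derivative F (b + c * r) - F (a + c * r)) (at r)" for r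
    unfolding \<phi>_def using \<open>c > 0\<close>
    by (auto intro!: derivative_eq_intros DERIV_chain2[OF has_field_derivative_primitive[OF cont]]
        simp: field_simps)
  moreover have "continuous_on UNIV (\<lambda>r. F (b + c * r) - F (a + c * r))"
    by (intro continuous_intros continuous_on_compose2[OF cont]) auto
  moreover have "\<bar>\<phi> r\<bar> \<le> (b - a) * P / c" for r
  proof -
    have "F \<in> borel_measurable lborel"
      using borel_measurable_continuous_onI[OF cont] by simp
    then have "\<bar>primitive F (b + c * r) - primitive F (a + c * r)\<bar> \<le> P * \<bar>(b + c * r) - (a + c * r)\<bar>"
      by (rule primitive_lipschitz) (use bound in auto)
    then show ?thesis
      using \<open>c > 0\<close> \<open>a \<le> b\<close> by (simp add: \<phi>_def abs_divide divide_right_mono mult.commute)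
  qed
  ultimately show ?thesis
    using abs_integral_by_parts_le[of \<phi> "\<lambda>r. F (b + c * r) - F (a + c * r)" "(b - a) * P / c" r1 r2] assms
    by simp
qed

section \<open>The area measure in polar coordinates\<close>

definition disk_density :: "real \<times> real \<Rightarrow> real" where
  "disk_density p = fst p * indicator polar_disk p"

lemma polar_disk_sets [measurable]: "polar_disk \<in> sets (borel \<Otimes>\<^sub>M borel)"
  unfolding polar_disk_def by auto

lemma disk_density_measurable [measurable]: "disk_density \<in> borel_measurable (borel \<Otimes>\<^sub>M borel)"
  unfolding disk_density_def by measurable

lemma disk_density_nonneg: "0 \<le> disk_density p"
  by (auto simp: disk_density_def polar_disk_def split: split_indicator)

lemma disk_measure_density: "disk_measure = density lborel (\<lambda>p. ennreal (disk_density p))"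
  unfolding disk_measure_def
  by (rule density_cong)
    (auto simp: borel_prod[symmetric] disk_density_def polar_disk_def split: split_indicator)

lemma sets_disk_measure [measurable_cong]: "sets disk_measure = sets (borel \<Otimes>\<^sub>M borel)"
  unfolding disk_measure_density borel_prod by simp

lemma space_disk_measure: "space disk_measure = UNIV"
  unfolding disk_measure_density by simp

lemma integrable_disk_measure_iff:
  fixes f :: "real \<times> real \<Rightarrow> real"
  assumes "f \<in> borel_measurable (borel \<Otimes>\<^sub>M borel)"
  shows "integrable disk_measure f \<longleftrightarrow> integrable lborel (\<lambda>p. disk_density p * f p)"
  unfolding disk_measure_density using assms disk_density_measurable unfolding borel_prod
  by (subst integrable_density) (auto simp: disk_density_nonneg)

lemma integral_disk_measure:
  fixes f :: "real \<times> real \<Rightarrow> real"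
  assumes "f \<in> borel_measurable (borel \<Otimes>\<^sub>M borel)"
  shows "integral\<^sup>L disk_measure f = (\<integral>p. disk_density p * f p \<partial>lborel)"
  unfolding disk_measure_density using assms disk_density_measurable unfolding borel_prod
  by (subst integral_density) (auto simp: disk_density_nonneg)

lemma integrable_disk_measure_indicator:
  assumes "X \<subseteq> polar_disk" "X \<in> sets (borel \<Otimes>\<^sub>M borel)"
  shows "integrable disk_measure (indicator X :: _ \<Rightarrow> real)"
proof -
  have "integrable lborel (\<lambda>p. disk_density p * indicator X p)"
  proof (rule Bochner_Integration.integrable_bound)
    show "integrable lborel (indicator (cbox (0::real, 0::real) (1, 2 * pi)) :: _ \<Rightarrow> real)"
      by (rule integrable_real_indicator) (simp, rule emeasure_lborel_cbox_finite)
    show "(\<lambda>p. disk_density p * indicator X p) \<in> borel_measurable lborel"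
      using assms(2) by (simp add: borel_prod[symmetric])
    show "AE p in lborel. norm (disk_density p * indicator X p)
        \<le> norm (indicator (cbox (0::real, 0::real) (1, 2 * pi)) p :: real)"
      using assms(1)
      by (intro AE_I2) (auto simp: disk_density_def polar_disk_def cbox_Pair_eq split: split_indicator)
  qed
  then show ?thesis
    using assms(2) by (subst integrable_disk_measure_iff) auto
qed

lemma integrable_disk_measure_bounded:
  fixes h :: "real \<times> real \<Rightarrow> real"
  assumes "X \<subseteq> polar_disk" "X \<in> sets (borel \<Otimes>\<^sub>M borel)"
    and "h \<in> borel_measurable (borel \<Otimes>\<^sub>M borel)" and bound: "AE p in disk_measure. \<bar>h p\<bar> \<le> L"
  shows "integrable disk_measure (\<lambda>p. indicator X p * h p)"
proof (rule Bochner_Integration.integrable_bound)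
  show "integrable disk_measure (\<lambda>p. \<bar>L\<bar> * indicator X p)"
    using integrable_disk_measure_indicator[OF assms(1,2)] by simp
  show "AE p in disk_measure. norm (indicator X p * h p) \<le> norm (\<bar>L\<bar> * indicator X p)"
    using bound by eventually_elim (auto split: split_indicator)
qed (use assms(2,3) in measurable)

lemma set_integral_disk_rectangle:
  fixes g :: "real \<times> real \<Rightarrow> real"
  assumes [measurable]: "A \<in> sets borel" "C \<in> sets borel" "g \<in> borel_measurable (borel \<Otimes>\<^sub>M borel)"
    and sub: "A \<times> C \<subseteq> polar_disk"
    and int: "integrable disk_measure (\<lambda>p. indicator (A \<times> C) p * g p)"
  shows "(LINT p:A \<times> C|disk_measure. g p) =
     (\<integral>r. indicator A r * r * (\<integral>\<theta>. indicator C \<theta> * g (r, \<theta>) \<partial>lborel) \<partial>lborel)"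
proof -
  define h where "h p = indicator A (fst p) * fst p * (indicator C (snd p) * g p)" for p
  have dens: "disk_density p * (indicator (A \<times> C) p * g p) = h p" for p
    using sub by (auto simp: disk_density_def h_def indicator_times split: split_indicator)
  have "integrable lborel h"
    using int by (subst (asm) integrable_disk_measure_iff) (auto simp: dens)
  then have "integrable (lborel \<Otimes>\<^sub>M lborel) h"
    by (simp add: lborel_prod)
  have "(LINT p:A \<times> C|disk_measure. g p) = integral\<^sup>L lborel h"
    unfolding set_lebesgue_integral_def by (subst integral_disk_measure) (auto simp: dens)
  also have "\<dots> = integral\<^sup>L (lborel \<Otimes>\<^sub>M lborel) h"
    by (simp add: lborel_prod)
  also have "\<dots> = (\<integral>r. (\<integral>\<theta>. h (r, \<theta>) \<partial>lborel) \<partial>lborel)"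
    by (rule lborel_pair.integral_fst'[symmetric]) fact
  finally show ?thesis
    unfolding h_def by simp
qed

lemma lborel_integral_Ioc:
  fixes g :: "real \<Rightarrow> real"
  assumes "a \<le> b"
  shows "(\<integral>x. indicator {a<..b} x * g x \<partial>lborel) = (LBINT x=a..b. g x)"
  using assms by (simp add: interval_integral_Ioc set_lebesgue_integral_def)

lemma lborel_integral_Ioc_radial:
  fixes r1 r2 K :: real
  assumes "r1 \<le> r2"
  shows "(\<integral>r. indicator {r1<..r2} r * r * K \<partial>lborel) = K * ((r2\<^sup>2 - r1\<^sup>2) / 2)"
proof -
  have "(LBINT r=r1..r2. r * K) = r2\<^sup>2 / 2 * K - r1\<^sup>2 / 2 * K"
    by (rule interval_integral_FTC_finite[where F="\<lambda>r. r\<^sup>2 / 2 * K"])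
      (auto intro!: continuous_intros derivative_eq_intros
        simp: has_real_derivative_iff_has_vector_derivative[symmetric])
  then show ?thesis
    using lborel_integral_Ioc[OF assms, of "\<lambda>r. r * K"] by (simp add: algebra_simps)
qed

lemma measure_disk_rectangle:
  assumes "0 \<le> r1" "r1 \<le> r2" "r2 \<le> 1" "0 \<le> a" "a \<le> b" "b \<le> 2 * pi"
  shows "measure disk_measure ({r1<..r2} \<times> {a<..b}) = (b - a) * ((r2\<^sup>2 - r1\<^sup>2) / 2)"
proof -
  have sub: "{r1<..r2} \<times> {a<..b} \<subseteq> polar_disk"
    using assms by (auto simp: polar_disk_def)
  have "measure disk_measure ({r1<..r2} \<times> {a<..b}) = (LINT p:{r1<..r2} \<times> {a<..b}|disk_measure. 1)"
    by (simp add: set_lebesgue_integral_def space_disk_measure)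
  also have "\<dots> = (\<integral>r. indicator {r1<..r2} r * r * (\<integral>\<theta>. indicator {a<..b} \<theta> * 1 \<partial>lborel) \<partial>lborel)"
    using integrable_disk_measure_indicator[OF sub] sub by (intro set_integral_disk_rectangle) auto
  also have "(\<integral>\<theta>. indicator {a<..b} \<theta> * 1 \<partial>lborel) = b - a"
    using assms by (subst lborel_integral_Ioc) auto
  finally show ?thesis
    using lborel_integral_Ioc_radial[OF assms(2), of "b - a"] by simp
qed

section \<open>Averages of the solution over tiling cells\<close>

lemma dyadic_parent_interval:
  fixes N M i :: nat and r :: real
  assumes "N \<le> M" and r: "real i / 2 ^ M < r" "r \<le> (real i + 1) / 2 ^ M"
  shows "real (i div 2 ^ (M - N)) < r * 2 ^ N" "r * 2 ^ N \<le> real (i div 2 ^ (M - N)) + 1"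
proof -
  define k :: nat where "k = 2 ^ (M - N)"
  define l where "l = i div k"
  have "k > 0" by (simp add: k_def)
  have "(2::real) ^ M = 2 ^ N * real k"
    unfolding k_def using \<open>N \<le> M\<close> by (simp flip: power_add)
  then have "real i < r * 2 ^ N * real k" "r * 2 ^ N * real k \<le> real i + 1"
    using r \<open>k > 0\<close> by (simp_all add: field_simps)
  moreover have "l * k \<le> i" "i + 1 \<le> (l + 1) * k"
    using Suc_leI[OF dividend_less_div_times[OF \<open>k > 0\<close>, of i]]
    by (simp_all add: l_def mult.commute)
  then have "real l * real k \<le> real i" "real i + 1 \<le> (real l + 1) * real k"
    by (metis of_nat_1 of_nat_add of_nat_le_iff of_nat_mult)+
  ultimately have "real l * real k < r * 2 ^ N * real k" "r * 2 ^ N * real k \<le> (real l + 1) * real k"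
    by linarith+
  then show "real (i div 2 ^ (M - N)) < r * 2 ^ N" "r * 2 ^ N \<le> real (i div 2 ^ (M - N)) + 1"
    using \<open>k > 0\<close> by (simp_all add: l_def k_def)
qed

lemma rho0_fine_annulus:
  fixes N M i :: nat and r :: real
  assumes "N \<le> M" "i < 2 ^ M" and r: "real i / 2 ^ M < r" "r \<le> (real i + 1) / 2 ^ M"
  shows "rho0 N f r \<theta> = f (i div 2 ^ (M - N)) \<theta>" and "i div 2 ^ (M - N) < 2 ^ N"
proof -
  define l0 where "l0 = i div 2 ^ (M - N)"
  have "(2::nat) ^ M = 2 ^ N * 2 ^ (M - N)"
    using \<open>N \<le> M\<close> by (simp flip: power_add)
  then show "i div 2 ^ (M - N) < 2 ^ N"
    using \<open>i < 2 ^ M\<close> by (simp add: less_mult_imp_div_less)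
  note parent = dyadic_parent_interval[OF \<open>N \<le> M\<close> r, folded l0_def]
  have "r \<in> {real l / 2 ^ N <.. (real l + 1) / 2 ^ N} \<longleftrightarrow> l = l0" for l
  proof -
    have "l = l0" if "real l < r * 2 ^ N" "r * 2 ^ N \<le> real l + 1"
    proof -
      have "real l < real (l0 + 1)" "real l0 < real (l + 1)"
        using that parent by simp_all
      then have "l < l0 + 1" "l0 < l + 1"
        by (simp_all only: of_nat_less_iff)
      then show ?thesis by simp
    qed
    then show ?thesis
      using parent by (auto simp: field_simps)
  qed
  then have "rho0 N f r \<theta> = (\<Sum>l<2 ^ N. if l = l0 then f l \<theta> else 0)"
    unfolding rho0_def by (intro sum.cong) (auto simp: indicator_def)
  then show "rho0 N f r \<theta> = f (i div 2 ^ (M - N)) \<theta>"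
    using \<open>i div 2 ^ (M - N) < 2 ^ N\<close> by (simp add: l0_def)
qed

lemma rho_sol_measurable [measurable]:
  assumes "\<And>l. l < 2 ^ N \<Longrightarrow> f l \<in> borel_measurable lborel"
  shows "rho_sol N f t \<in> borel_measurable (borel \<Otimes>\<^sub>M borel)"
proof -
  have "(\<lambda>p. f l (snd p + 2 * pi * t * fst p)) \<in> borel_measurable (borel \<Otimes>\<^sub>M borel)"
    if "l < 2 ^ N" for l
    by (rule measurable_compose[of _ _ borel]) (use assms that in auto)
  then show ?thesis
    unfolding rho_sol_def rho0_def by measurable
qed

lemma set_integral_sheared_rectangle:
  fixes g :: "real \<Rightarrow> real" and \<rho> :: "real \<times> real \<Rightarrow> real" and c r1 r2 a b :: real
  assumes li: "\<And>x y. set_integrable lborel {x..y} g"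
    and "0 \<le> r1" "r1 \<le> r2" "r2 \<le> 1" "0 \<le> a" "a \<le> b" "b \<le> 2 * pi"
    and [measurable]: "\<rho> \<in> borel_measurable (borel \<Otimes>\<^sub>M borel)"
    and "integrable disk_measure (\<lambda>p. indicator ({r1<..r2} \<times> {a<..b}) p * \<rho> p)"
    and sheared: "\<And>r \<theta>. r \<in> {r1<..r2} \<Longrightarrow> \<rho> (r, \<theta>) = g (\<theta> + c * r)"
  shows "(LINT p:{r1<..r2} \<times> {a<..b}|disk_measure. \<rho> p) =
    (LBINT r=r1..r2. r * (primitive g (b + c * r) - primitive g (a + c * r)))"
proof -
  have "(LINT p:{r1<..r2} \<times> {a<..b}|disk_measure. \<rho> p) =
      (\<integral>r. indicator {r1<..r2} r * r * (\<integral>\<theta>. indicator {a<..b} \<theta> * \<rho> (r, \<theta>) \<partial>lborel) \<partial>lborel)"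
    using assms by (intro set_integral_disk_rectangle) (auto simp: polar_disk_def)
  also have "\<dots> = (\<integral>r. indicator {r1<..r2} r * (r * (primitive g (b + c * r) - primitive g (a + c * r))) \<partial>lborel)"
  proof (intro Bochner_Integration.integral_cong refl)
    fix r
    have "(\<integral>\<theta>. indicator {a<..b} \<theta> * g (\<theta> + c * r) \<partial>lborel) = (LBINT \<theta>=a+c*r..b+c*r. g \<theta>)"
      using \<open>a \<le> b\<close> by (simp add: lborel_integral_Ioc interval_integral_shift)
    also have "\<dots> = primitive g (b + c * r) - primitive g (a + c * r)"
      by (rule primitive_diff[OF li, symmetric])
    finally show "indicator {r1<..r2} r * r * (\<integral>\<theta>. indicator {a<..b} \<theta> * \<rho> (r, \<theta>) \<partial>lborel) =
        indicator {r1<..r2} r * (r * (primitive g (b + c * r) - primitive g (a + c * r)))"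
      by (cases "r \<in> {r1<..r2}") (simp_all add: sheared)
  qed
  finally show ?thesis
    using \<open>r1 \<le> r2\<close> by (simp add: lborel_integral_Ioc)
qed

lemma set_integral_disk_annulus:
  fixes h :: "real \<times> real \<Rightarrow> real" and r1 r2 H :: real
  assumes "0 \<le> r1" "r1 \<le> r2" "r2 \<le> 1" and [measurable]: "h \<in> borel_measurable (borel \<Otimes>\<^sub>M borel)"
    and "integrable disk_measure (\<lambda>p. indicator ({r1<..r2} \<times> {0<..2*pi}) p * h p)"
    and angular: "\<And>r. r \<in> {r1<..r2} \<Longrightarrow> (LBINT \<theta>=0..2*pi. h (r, \<theta>)) = H"
  shows "(LINT p:{r1<..r2} \<times> {0<..2*pi}|disk_measure. h p) = H * ((r2\<^sup>2 - r1\<^sup>2) / 2)"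
proof -
  have "(LINT p:{r1<..r2} \<times> {0<..2*pi}|disk_measure. h p) =
      (\<integral>r. indicator {r1<..r2} r * r * (\<integral>\<theta>. indicator {0<..2*pi} \<theta> * h (r, \<theta>) \<partial>lborel) \<partial>lborel)"
    using assms by (intro set_integral_disk_rectangle) (auto simp: polar_disk_def)
  also have "\<dots> = (\<integral>r. indicator {r1<..r2} r * r * H \<partial>lborel)"
    by (intro Bochner_Integration.integral_cong refl)
      (auto simp: angular lborel_integral_Ioc zero_ereal_def[symmetric] split: split_indicator)
  finally show ?thesis
    using lborel_integral_Ioc_radial \<open>r1 \<le> r2\<close> by simp
qed

lemma L1_profile_le_Linf:
  fixes g :: "real \<Rightarrow> real" and \<rho> :: "real \<times> real \<Rightarrow> real" and c r1 r2 L :: real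
  assumes per: "\<And>x. g (x + 2 * pi) = g x" and li: "\<And>x y. set_integrable lborel {x..y} g"
    and "0 \<le> r1" "r1 < r2" "r2 \<le> 1"
    and [measurable]: "\<rho> \<in> borel_measurable (borel \<Otimes>\<^sub>M borel)"
    and bound: "AE p in disk_measure. \<bar>\<rho> p\<bar> \<le> L"
    and sheared: "\<And>r \<theta>. r \<in> {r1<..r2} \<Longrightarrow> \<rho> (r, \<theta>) = g (\<theta> + c * r)"
  shows "(LBINT z=0..2*pi. \<bar>g z\<bar>) \<le> 2 * pi * L"
proof -
  define P where "P = (LBINT z=0..2*pi. \<bar>g z\<bar>)"
  define S where "S = {r1<..r2} \<times> {0<..2*pi}"
  define D where "D = (r2\<^sup>2 - r1\<^sup>2) / 2"
  have S: "S \<subseteq> polar_disk" "S \<in> sets (borel \<Otimes>\<^sub>M borel)"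
    using assms by (auto simp: S_def polar_disk_def)
  have int_abs: "integrable disk_measure (\<lambda>p. indicator S p * \<bar>\<rho> p\<bar>)"
    using S bound by (intro integrable_disk_measure_bounded) auto
  have int_L: "integrable disk_measure (\<lambda>p. indicator S p * L)"
    using integrable_disk_measure_indicator[OF S] by simp
  have "(LBINT \<theta>=0..2*pi. \<bar>\<rho> (r, \<theta>)\<bar>) = P" if "r \<in> {r1<..r2}" for r
    using interval_integral_shift[of 0 "2*pi" "\<lambda>z. \<bar>g z\<bar>" "c * r"]
      periodic_interval_integral[of "2*pi" "\<lambda>z. \<bar>g z\<bar>" "c * r"] per set_integrable_abs[OF li]
    by (simp add: sheared[OF that] zero_ereal_def P_def add.commute)
  then have "(LINT p:S|disk_measure. \<bar>\<rho> p\<bar>) = P * D"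
    using assms int_abs unfolding S_def D_def by (intro set_integral_disk_annulus) auto
  moreover have "(LINT p:S|disk_measure. L) = 2 * pi * L * D"
    using assms int_L interval_integral_const(2)[of 0 "2 * pi" L] unfolding S_def D_def
    by (intro set_integral_disk_annulus) (auto simp: zero_ereal_def)
  moreover have "(LINT p:S|disk_measure. \<bar>\<rho> p\<bar>) \<le> (LINT p:S|disk_measure. L)"
    using int_abs int_L bound unfolding set_integrable_def[symmetric]
    by (intro set_integral_mono_AE) (auto simp: set_integrable_def mult.commute)
  moreover have "D > 0"
    using assms by (simp add: D_def power_strict_mono)
  ultimately show ?thesis
    by (simp add: P_def)
qed

lemma abs_set_integral_sheared_rectangle_le:
  fixes g :: "real \<Rightarrow> real" and \<rho> :: "real \<times> real \<Rightarrow> real" and c r1 r2 a b B L :: real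
  assumes g_meas: "g \<in> borel_measurable lborel" and g_bound: "AE z in lborel. \<bar>g z\<bar> \<le> B"
    and per: "\<And>x. g (x + 2 * pi) = g x" and mean_zero: "(LBINT z=0..2*pi. g z) = 0"
    and "c > 0" "0 \<le> r1" "r1 < r2" "r2 \<le> 1" "0 \<le> a" "a \<le> b" "b \<le> 2 * pi"
    and [measurable]: "\<rho> \<in> borel_measurable (borel \<Otimes>\<^sub>M borel)"
    and "AE p in disk_measure. \<bar>\<rho> p\<bar> \<le> L"
    and "\<And>r \<theta>. r \<in> {r1<..r2} \<Longrightarrow> \<rho> (r, \<theta>) = g (\<theta> + c * r)"
  shows "\<bar>LINT p:{r1<..r2} \<times> {a<..b}|disk_measure. \<rho> p\<bar> \<le> 4 * pi * r2 * (b - a) * L / c"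
proof -
  define P where "P = (LBINT z=0..2*pi. \<bar>g z\<bar>)"
  note li = set_integrable_Icc_if_AE_bounded[OF g_meas g_bound]
  have "integrable disk_measure (\<lambda>p. indicator ({r1<..r2} \<times> {a<..b}) p * \<rho> p)"
    using assms by (intro integrable_disk_measure_bounded) (auto simp: polar_disk_def)
  then have "\<bar>LINT p:{r1<..r2} \<times> {a<..b}|disk_measure. \<rho> p\<bar> =
      \<bar>LBINT r=r1..r2. r * (primitive g (b + c * r) - primitive g (a + c * r))\<bar>"
    using assms by (subst set_integral_sheared_rectangle[OF li]) auto
  also have "\<dots> \<le> 2 * r2 * (b - a) * P / c"
    using assms continuous_on_primitive[OF g_meas g_bound]
      abs_primitive_le[of "2 * pi" g, OF _ per li mean_zero]
    by (intro oscillatory_integral_bound) (auto simp: P_def)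
  also have "\<dots> \<le> 2 * r2 * (b - a) * (2 * pi * L) / c"
  proof -
    have "P \<le> 2 * pi * L"
      unfolding P_def using assms by (intro L1_profile_le_Linf[OF per li]) auto
    then show ?thesis
      using assms by (intro divide_right_mono mult_left_mono) auto
  qed
  finally show ?thesis
    by (simp add: mult_ac)
qed

lemma abs_avg_sheared_rectangle_le:
  fixes g :: "real \<Rightarrow> real" and \<rho> :: "real \<times> real \<Rightarrow> real" and c r1 r2 a b B L :: real
  assumes "g \<in> borel_measurable lborel" "AE z in lborel. \<bar>g z\<bar> \<le> B"
    and "\<And>x. g (x + 2 * pi) = g x" "(LBINT z=0..2*pi. g z) = 0"
    and "c > 0" "0 \<le> r1" "r1 < r2" "r2 \<le> 1" "0 \<le> a" "a < b" "b \<le> 2 * pi"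
    and "\<rho> \<in> borel_measurable (borel \<Otimes>\<^sub>M borel)"
    and "AE p in disk_measure. \<bar>\<rho> p\<bar> \<le> L"
    and "\<And>r \<theta>. r \<in> {r1<..r2} \<Longrightarrow> \<rho> (r, \<theta>) = g (\<theta> + c * r)"
  shows "\<bar>avg ({r1<..r2} \<times> {a<..b}) \<rho>\<bar> \<le> 8 * pi * r2 * L / (c * (r2\<^sup>2 - r1\<^sup>2))"
proof -
  define D where "D = (r2\<^sup>2 - r1\<^sup>2) / 2"
  have "D > 0"
    using assms by (simp add: D_def power_strict_mono)
  have "measure disk_measure ({r1<..r2} \<times> {a<..b}) = (b - a) * D"
    unfolding D_def using assms by (intro measure_disk_rectangle) auto
  then have "\<bar>avg ({r1<..r2} \<times> {a<..b}) \<rho>\<bar> =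
      \<bar>LINT p:{r1<..r2} \<times> {a<..b}|disk_measure. \<rho> p\<bar> / ((b - a) * D)"
    using \<open>D > 0\<close> \<open>a < b\<close> by (simp add: avg_def abs_divide)
  also have "\<dots> \<le> (4 * pi * r2 * (b - a) * L / c) / ((b - a) * D)"
    using assms \<open>D > 0\<close>
    by (intro divide_right_mono abs_set_integral_sheared_rectangle_le) auto
  also have "\<dots> = 4 * pi * r2 * L / (c * D)"
    using assms \<open>D > 0\<close> by (simp add: field_simps)
  also have "\<dots> = 8 * pi * r2 * L / (c * (r2\<^sup>2 - r1\<^sup>2))"
    by (simp add: D_def)
  finally show ?thesis .
qed

lemma dyadic_annulus_weight_le:
  fixes i M :: nat
  shows "(real i + 1) / 2 ^ M \<le> 2 ^ M * (((real i + 1) / 2 ^ M)\<^sup>2 - (real i / 2 ^ M)\<^sup>2)"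
proof -
  have "2 ^ M * (((real i + 1) / 2 ^ M)\<^sup>2 - (real i / 2 ^ M)\<^sup>2) = (2 * real i + 1) / 2 ^ M"
    by (simp add: field_simps power2_eq_square)
  then show ?thesis
    by (simp add: divide_right_mono)
qed

lemma Qcell_angular_interval:
  assumes "j \<le> i"
  obtains a b where "Qcell M i j = {real i / 2 ^ M<..(real i + 1) / 2 ^ M} \<times> {a<..b}"
    and "0 \<le> a" "a < b" "b \<le> 2 * pi"
proof
  have "(real j + 1) / (real i + 1) \<le> 1"
    using assms by simp
  from mult_left_mono[OF this, of "2 * pi"]
  show "0 \<le> 2 * pi * (real j / (real i + 1))"
    "2 * pi * (real j / (real i + 1)) < 2 * pi * ((real j + 1) / (real i + 1))"
    "2 * pi * ((real j + 1) / (real i + 1)) \<le> 2 * pi"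
    by (auto simp: divide_strict_right_mono)
qed (auto simp: Qcell_def)

lemma abs_avg_Qcell_rho_sol_le:
  fixes N M i j :: nat and f :: "nat \<Rightarrow> real \<Rightarrow> real" and t L :: real
  assumes "N \<le> M" "i < 2 ^ M" "j \<le> i" "t > 0"
    and profile: "\<And>l. l < 2 ^ N \<Longrightarrow> f l \<in> borel_measurable lborel \<and>
      (\<exists>B. AE \<theta> in lborel. \<bar>f l \<theta>\<bar> \<le> B) \<and> (\<forall>\<theta>. f l (\<theta> + 2 * pi) = f l \<theta>) \<and>
      (LBINT \<theta>=0..2*pi. f l \<theta>) = 0"
    and bound: "AE p in disk_measure. \<bar>rho_sol N f t p\<bar> \<le> L"
  shows "\<bar>avg (Qcell M i j) (rho_sol N f t)\<bar> \<le> 4 * 2 ^ M / t * L"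
proof -
  define r1 :: real where "r1 = real i / 2 ^ M"
  define r2 :: real where "r2 = (real i + 1) / 2 ^ M"
  obtain a b where Q: "Qcell M i j = {r1<..r2} \<times> {a<..b}" and ab: "0 \<le> a" "a < b" "b \<le> 2 * pi"
    using Qcell_angular_interval[OF \<open>j \<le> i\<close>] unfolding r1_def r2_def .
  define g where "g = f (i div 2 ^ (M - N))"
  have r: "0 \<le> r1" "r1 < r2" "r2 \<le> 1"
    using \<open>i < 2 ^ M\<close> by (auto simp: r1_def r2_def field_simps simp flip: of_nat_Suc)
  obtain B where g: "g \<in> borel_measurable lborel" "AE z in lborel. \<bar>g z\<bar> \<le> B"
    "\<And>x. g (x + 2 * pi) = g x" "(LBINT z=0..2*pi. g z) = 0"
    using profile[OF rho0_fine_annulus(2)[OF \<open>N \<le> M\<close> \<open>i < 2 ^ M\<close>, of r2]] r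
    by (auto simp: g_def r1_def r2_def)
  have sheared: "rho_sol N f t (r, \<theta>) = g (\<theta> + 2 * pi * t * r)" if "r \<in> {r1<..r2}" for r \<theta>
    using rho0_fine_annulus(1)[OF \<open>N \<le> M\<close> \<open>i < 2 ^ M\<close>] that
    by (simp add: rho_sol_def g_def r1_def r2_def)
  have meas: "rho_sol N f t \<in> borel_measurable (borel \<Otimes>\<^sub>M borel)"
    using profile by (intro rho_sol_measurable) auto
  define K where "K = 4 * r2 / (t * (r2\<^sup>2 - r1\<^sup>2))"
  have "\<bar>avg (Qcell M i j) (rho_sol N f t)\<bar> \<le> 8 * pi * r2 * L / (2 * pi * t * (r2\<^sup>2 - r1\<^sup>2))"
    unfolding Q using g r ab \<open>t > 0\<close> meas bound sheared
    by (intro abs_avg_sheared_rectangle_le[where g = g and B = B]) (auto simp: mult_ac)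
  also have "\<dots> = K * L"
    using r \<open>t > 0\<close> by (simp add: K_def field_simps power_strict_mono)
  finally have avg_le: "\<bar>avg (Qcell M i j) (rho_sol N f t)\<bar> \<le> K * L" .
  have "K > 0"
    using r \<open>t > 0\<close> by (simp add: K_def power_strict_mono)
  with avg_le have "L \<ge> 0"
    by (smt (verit) zero_le_mult_iff)
  have "K \<le> 4 * (2 ^ M * (r2\<^sup>2 - r1\<^sup>2)) / (t * (r2\<^sup>2 - r1\<^sup>2))"
    using r \<open>t > 0\<close> dyadic_annulus_weight_le[of i M, folded r1_def r2_def] unfolding K_def
    by (intro divide_right_mono) (auto simp: power_mono)
  also have "\<dots> = 4 * 2 ^ M / t"
    using r by (simp add: power_strict_mono)
  finally show ?thesis
    using avg_le \<open>L \<ge> 0\<close> by (meson mult_right_mono order_trans)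
qed

lemma abs_le_esssup_if_AE_bound:
  fixes f :: "'a \<Rightarrow> real" and y K c :: real
  assumes "0 < K" "K \<le> c" and bound: "\<And>L. AE x in M. \<bar>f x\<bar> \<le> L \<Longrightarrow> \<bar>y\<bar> \<le> K * L"
  shows "ereal \<bar>y\<bar> \<le> ereal c * esssup M (\<lambda>x. ereal \<bar>f x\<bar>)"
proof -
  have AE: "AE x in M. ereal \<bar>f x\<bar> \<le> esssup M (\<lambda>x. ereal \<bar>f x\<bar>)"
    by (rule esssup_AE)
  show ?thesis
  proof (cases "esssup M (\<lambda>x. ereal \<bar>f x\<bar>)")
    case (real L)
    then have "\<bar>y\<bar> \<le> K * L"
      using AE by (intro bound) simp
    moreover from this have "L \<ge> 0"
      using \<open>0 < K\<close> by (smt (verit) zero_le_mult_iff)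
    ultimately show ?thesis
      using \<open>K \<le> c\<close> real by (simp add: order_trans[OF _ mult_right_mono])
  next
    case PInf
    then show ?thesis
      using assms by simp
  next
    case MInf
    then have "\<bar>y\<bar> \<le> K * -1"
      using AE by (intro bound) (auto elim!: eventually_mono)
    then show ?thesis
      using \<open>0 < K\<close> by simp
  qed
qed

theorem lemma2p6:
  shows "\<exists>C>0::real. \<forall>(N::nat) (\<kappa>::real) (f::nat \<Rightarrow> real \<Rightarrow> real).
    (0 < \<kappa> \<and> \<kappa> < 1 \<and>
     (\<forall>l<2^N. f l \<in> borel_measurable lborel \<and>
               (\<exists>B. AE \<theta> in lborel. \<bar>f l \<theta>\<bar> \<le> B) \<and>
               (\<forall>\<theta>. f l (\<theta> + 2*pi) = f l \<theta>) \<and>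
               (LBINT \<theta>=0..2*pi. f l \<theta>) = 0))
    \<longrightarrow> (\<forall>M>N. \<forall>Q\<in>QM M.
          (\<forall>t. t \<ge> C * 2^M / \<kappa> \<longrightarrow>
             ereal \<bar>avg Q (rho_sol N f t)\<bar> \<le> ereal (\<kappa>/4) * Linf_disk (rho_sol N f t)) \<and>
          (\<forall>t. t \<ge> C * 2^(2*M) \<longrightarrow>
             ereal \<bar>avg Q (rho_sol N f t)\<bar> \<le> ereal (2 powi (- int M)) * Linf_disk (rho_sol N f t)))"
proof (intro exI[of _ 16] conjI allI impI ballI)
  fix N M :: nat and \<kappa> t :: real and f :: "nat \<Rightarrow> real \<Rightarrow> real" and Q
  assume hyps: "0 < \<kappa> \<and> \<kappa> < 1 \<and> (\<forall>l<2^N. f l \<in> borel_measurable lborel \<and>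
      (\<exists>B. AE \<theta> in lborel. \<bar>f l \<theta>\<bar> \<le> B) \<and> (\<forall>\<theta>. f l (\<theta> + 2*pi) = f l \<theta>) \<and>
      (LBINT \<theta>=0..2*pi. f l \<theta>) = 0)"
    and "N < M" and "Q \<in> QM M"
  then obtain i j where Q: "Q = Qcell M i j" and "i < 2 ^ M" "j \<le> i"
    unfolding QM_def by blast
  have bound: "ereal \<bar>avg Q (rho_sol N f t)\<bar> \<le> ereal c * Linf_disk (rho_sol N f t)"
    if "t > 0" "4 * 2 ^ M / t \<le> c" for c t
    unfolding Linf_disk_def Q using hyps \<open>N < M\<close> \<open>i < 2 ^ M\<close> \<open>j \<le> i\<close> that
    by (intro abs_le_esssup_if_AE_bound[of "4 * 2 ^ M / t"] abs_avg_Qcell_rho_sol_le) auto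
  show "ereal \<bar>avg Q (rho_sol N f t)\<bar> \<le> ereal (\<kappa> / 4) * Linf_disk (rho_sol N f t)"
    if "t \<ge> 16 * 2 ^ M / \<kappa>"
  proof (rule bound)
    show "t > 0"
      using that hyps by (smt (verit) divide_pos_pos zero_less_power)
    then show "4 * 2 ^ M / t \<le> \<kappa> / 4"
      using that hyps by (simp add: field_simps)
  qed
  show "ereal \<bar>avg Q (rho_sol N f t)\<bar> \<le> ereal (2 powi - int M) * Linf_disk (rho_sol N f t)"
    if "t \<ge> 16 * 2 ^ (2 * M)"
  proof (rule bound)
    show "t > 0"
      using that by (smt (verit) zero_less_power)
    have "(2::real) ^ (2 * M) = 2 ^ M * 2 ^ M"
      by (metis power_add mult_2)
    with \<open>t > 0\<close> that show "4 * 2 ^ M / t \<le> 2 powi - int M"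
      by (simp add: power_int_minus power_int_of_nat field_simps)
  qed
qed simp

end
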